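(* For $n=3$, $DCell_1$ is Hamiltonian-connected. The same holds for every Generalized $DCell_1$ with $n=3$.
   Context: $DCell_0$ is the complete graph $K_n$ ($t_0=n$ vertices). $DCell_1$ consists of $t_0+1$ vertex-disjoint copies $D_0^0,\dots,D_0^{t_0}$ of $K_n$, with vertices of each copy numbered $0,\dots,n-1$, and for each pair $a<b$ the vertex numbered $b-1$ of $D_0^a$ is joined to the vertex numbered $a$ of $D_0^b$. A Generalized $DCell_1$ uses instead any set of edges between the copies such that each pair of distinct copies is joined by exactly one edge and each vertex is incident with exactly one such edge. A graph is Hamiltonian-connected if every two distinct vertices are the endpoints of a Hamiltonian path. *)

theory Defs
  imports Main
begin

type_synonym vert = "nat \<times> nat"

text \<open>Vertex set of a (generalized) DCell_1 built from n+1 copies of K_n: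
  vertex (a, i) is the vertex numbered i of copy D_0^a, with a in {0..n}, i in {0..<n}.\<close>
definition dverts :: "nat \<Rightarrow> vert set" where
  "dverts n = {0..n} \<times> {0..<n}"

definition inner_edge :: "vert \<Rightarrow> vert \<Rightarrow> bool" where
  "inner_edge u v \<longleftrightarrow> fst u = fst v \<and> snd u \<noteq> snd v"

definition dcell_link :: "nat \<Rightarrow> vert \<Rightarrow> vert \<Rightarrow> bool" where
  "dcell_link n u v \<longleftrightarrow>
     (fst u < fst v \<and> fst v \<le> n \<and> snd u = fst v - 1 \<and> snd v = fst u) \<or>
     (fst v < fst u \<and> fst u \<le> n \<and> snd v = fst u - 1 \<and> snd u = fst v)"

definition dgraph :: "nat \<Rightarrow> (vert \<Rightarrow> vert \<Rightarrow> bool) \<Rightarrow> vert \<Rightarrow> vert \<Rightarrow> bool" where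
  "dgraph n M u v \<longleftrightarrow> u \<in> dverts n \<and> v \<in> dverts n \<and> (inner_edge u v \<or> M u v)"

definition DCell1 :: "nat \<Rightarrow> vert \<Rightarrow> vert \<Rightarrow> bool" where
  "DCell1 n = dgraph n (dcell_link n)"

definition gen_links :: "nat \<Rightarrow> (vert \<Rightarrow> vert \<Rightarrow> bool) \<Rightarrow> bool" where
  "gen_links n M \<longleftrightarrow>
     (\<forall>u v. M u v \<longrightarrow> M v u) \<and>
     (\<forall>u v. M u v \<longrightarrow> u \<in> dverts n \<and> v \<in> dverts n \<and> fst u \<noteq> fst v) \<and>
     (\<forall>a b. a \<le> n \<longrightarrow> b \<le> n \<longrightarrow> a \<noteq> b \<longrightarrow>
        (\<exists>!e. M (fst e) (snd e) \<and> fst (fst e) = a \<and> fst (snd e) = b)) \<and>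
     (\<forall>u \<in> dverts n. \<exists>!v. M u v)"

definition GenDCell1 :: "nat \<Rightarrow> (vert \<Rightarrow> vert \<Rightarrow> bool) \<Rightarrow> vert \<Rightarrow> vert \<Rightarrow> bool" where
  "GenDCell1 n M = dgraph n M"

definition ham_path :: "'a set \<Rightarrow> ('a \<Rightarrow> 'a \<Rightarrow> bool) \<Rightarrow> 'a \<Rightarrow> 'a \<Rightarrow> 'a list \<Rightarrow> bool" where
  "ham_path V E x y p \<longleftrightarrow> distinct p \<and> set p = V \<and> p \<noteq> [] \<and> hd p = x \<and> last p = y \<and>
     (\<forall>i. Suc i < length p \<longrightarrow> E (p ! i) (p ! Suc i))"

definition hamiltonian_connected :: "'a set \<Rightarrow> ('a \<Rightarrow> 'a \<Rightarrow> bool) \<Rightarrow> bool" where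
  "hamiltonian_connected V E \<longleftrightarrow>
     (\<forall>x\<in>V. \<forall>y\<in>V. x \<noteq> y \<longrightarrow> (\<exists>p. ham_path V E x y p))"

end

theory Submission
  imports Defs "HOL-Combinatorics.Permutations"
begin

(* Identify the vertex u of copy a whose inter-copy edge ends in copy b with the pair (a, b).
   For every admissible set of inter-copy edges this is a bijection onto the ordered pairs of
   distinct indices in {0..n}; edges inside a copy join pairs with equal first entry, and the
   inter-copy edge at (a, b) leads to (b, a). Hence every Generalized DCell_1, the standard one
   included, is isomorphic to the truncated complete graph on n + 1 points, for n = 3 the
   truncated tetrahedron. Permutations of the four indices act on it by automorphisms,
   transitively on vertices, and the transposition of 2 and 3 fixes (0, 1); so six explicit
   Hamiltonian paths starting at (0, 1) cover all pairs of end vertices. *)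

definition bij_graph_hom ::
    "'a set \<Rightarrow> ('a \<Rightarrow> 'a \<Rightarrow> bool) \<Rightarrow> 'b set \<Rightarrow> ('b \<Rightarrow> 'b \<Rightarrow> bool) \<Rightarrow> ('a \<Rightarrow> 'b) \<Rightarrow> bool" where
  "bij_graph_hom V E V' E' g \<longleftrightarrow> bij_betw g V V' \<and> (\<forall>u\<in>V. \<forall>v\<in>V. E u v \<longrightarrow> E' (g u) (g v))"

lemma ham_path_iff_successively:
  "ham_path V E x y p \<longleftrightarrow>
     distinct p \<and> set p = V \<and> p \<noteq> [] \<and> hd p = x \<and> last p = y \<and> successively E p"
  unfolding ham_path_def successively_conv_nth ..

lemma ham_path_bij_graph_hom:
  assumes g: "bij_graph_hom V E V' E' g" and p: "ham_path V E x y p"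
  shows "ham_path V' E' (g x) (g y) (map g p)"
proof -
  have bij: "bij_betw g V V'" and hom: "\<And>u v. u \<in> V \<Longrightarrow> v \<in> V \<Longrightarrow> E u v \<Longrightarrow> E' (g u) (g v)"
    using g unfolding bij_graph_hom_def by auto
  have "successively (\<lambda>u v. E' (g u) (g v)) p"
    using p hom unfolding ham_path_iff_successively by (auto intro: successively_mono)
  then show ?thesis
    using p bij unfolding ham_path_iff_successively bij_betw_def
    by (simp add: distinct_map hd_map last_map successively_map)
qed

lemma hamiltonian_connected_bij_graph_hom:
  assumes g: "bij_graph_hom V E V' E' g" and hc: "hamiltonian_connected V E"
  shows "hamiltonian_connected V' E'"
  unfolding hamiltonian_connected_def
proof (intro ballI impI)
  fix x' y' assume "x' \<in> V'" "y' \<in> V'" "x' \<noteq> y'"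
  moreover have "V' = g ` V" using g unfolding bij_graph_hom_def bij_betw_def by blast
  ultimately obtain x y where "x \<in> V" "y \<in> V" "x \<noteq> y" "x' = g x" "y' = g y"
    by blast
  with hc obtain p where "ham_path V E x y p"
    unfolding hamiltonian_connected_def by blast
  then show "\<exists>p. ham_path V' E' x' y' p"
    using ham_path_bij_graph_hom[OF g] \<open>x' = g x\<close> \<open>y' = g y\<close> by blast
qed

lemma hamiltonian_connected_by_symmetry:
  assumes reach: "\<And>x y. x \<in> V \<Longrightarrow> y \<in> V \<Longrightarrow> x \<noteq> y \<Longrightarrow>
      \<exists>g y'. bij_graph_hom V E V E g \<and> g x\<^sub>0 = x \<and> g y' = y \<and> y' \<in> R"
    and paths: "\<And>y. y \<in> R \<Longrightarrow> \<exists>p. ham_path V E x\<^sub>0 y p"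
  shows "hamiltonian_connected V E"
  unfolding hamiltonian_connected_def
proof (intro ballI impI)
  fix x y assume "x \<in> V" "y \<in> V" "x \<noteq> y"
  then obtain g y' where g: "bij_graph_hom V E V E g" "g x\<^sub>0 = x" "g y' = y" and "y' \<in> R"
    using reach by blast
  then obtain p where "ham_path V E x\<^sub>0 y' p" using paths by blast
  then show "\<exists>p. ham_path V E x y p" using ham_path_bij_graph_hom[OF g(1)] g(2,3) by blast
qed

definition truncated_complete_verts :: "nat \<Rightarrow> vert set" where
  "truncated_complete_verts n = {(a, b). a \<le> n \<and> b \<le> n \<and> a \<noteq> b}"

definition truncated_complete_adj :: "vert \<Rightarrow> vert \<Rightarrow> bool" where
  "truncated_complete_adj u v \<longleftrightarrow> (fst u = fst v \<and> snd u \<noteq> snd v) \<or> u = prod.swap v"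

lemma bij_graph_hom_truncated_complete_permutes:
  assumes \<sigma>: "\<sigma> permutes {0..n}"
  shows "bij_graph_hom (truncated_complete_verts n) truncated_complete_adj
           (truncated_complete_verts n) truncated_complete_adj (map_prod \<sigma> \<sigma>)"
proof -
  have inj: "inj \<sigma>" using \<sigma> by (rule permutes_inj)
  have le: "\<sigma> x \<le> n \<longleftrightarrow> x \<le> n" for x
    using permutes_in_image[OF \<sigma>, of x] by simp
  have "map_prod \<sigma> \<sigma> ` truncated_complete_verts n = truncated_complete_verts n"
  proof
    show "map_prod \<sigma> \<sigma> ` truncated_complete_verts n \<subseteq> truncated_complete_verts n"
      using le inj unfolding truncated_complete_verts_def by (auto simp: inj_eq)
    show "truncated_complete_verts n \<subseteq> map_prod \<sigma> \<sigma> ` truncated_complete_verts n"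
    proof
      fix u assume u: "u \<in> truncated_complete_verts n"
      obtain a b where "u = (\<sigma> a, \<sigma> b)"
        using permutes_surj[OF \<sigma>] by (metis prod.collapse surj_f_inv_f)
      with u show "u \<in> map_prod \<sigma> \<sigma> ` truncated_complete_verts n"
        using le unfolding truncated_complete_verts_def by auto
    qed
  qed
  moreover have "inj (map_prod \<sigma> \<sigma>)" using inj by (simp add: prod.inj_map)
  moreover have "truncated_complete_adj (map_prod \<sigma> \<sigma> u) (map_prod \<sigma> \<sigma> v)"
    if "truncated_complete_adj u v" for u v
    using that inj unfolding truncated_complete_adj_def by (cases u, cases v) (auto simp: inj_eq)
  ultimately show ?thesis
    unfolding bij_graph_hom_def bij_betw_def by (auto intro: inj_on_subset)
qed

lemma truncated_complete_verts_transitive: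
  assumes "x \<in> truncated_complete_verts n"
  obtains \<sigma> where "\<sigma> permutes {0..n}" "map_prod \<sigma> \<sigma> (0, 1) = x"
proof -
  obtain a b where x: "x = (a, b)" "a \<le> n" "b \<le> n" "a \<noteq> b"
    using assms unfolding truncated_complete_verts_def by auto
  define c where "c = transpose a 0 b"
  have "1 \<le> n" "c \<noteq> 0" "c \<le> n" using x unfolding c_def transpose_def by auto
  then have "transpose a 0 \<circ> transpose 1 c permutes {0..n}"
    using x by (intro permutes_compose permutes_swap_id) auto
  moreover have "map_prod (transpose a 0 \<circ> transpose 1 c) (transpose a 0 \<circ> transpose 1 c) (0, 1) = x"
    using \<open>c \<noteq> 0\<close> x(1) unfolding c_def by (auto simp: transpose_def)
  ultimately show thesis by (rule that)
qed

lemma gen_links_in_dverts: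
  "gen_links n M \<Longrightarrow> M u v \<Longrightarrow> u \<in> dverts n \<and> v \<in> dverts n \<and> fst u \<noteq> fst v"
  unfolding gen_links_def by (elim conjE) (erule allE, erule allE, erule mp)

lemma gen_links_link_between:
  "gen_links n M \<Longrightarrow> a \<le> n \<Longrightarrow> b \<le> n \<Longrightarrow> a \<noteq> b \<Longrightarrow>
     \<exists>!e. M (fst e) (snd e) \<and> fst (fst e) = a \<and> fst (snd e) = b"
  unfolding gen_links_def by (elim conjE) (erule allE[of _ a], erule allE[of _ b], simp)

lemma gen_links_sym: "gen_links n M \<Longrightarrow> M u v \<Longrightarrow> M v u"
  unfolding gen_links_def by (elim conjE) (erule allE, erule allE, erule mp)

lemma gen_links_partner:
  "gen_links n M \<Longrightarrow> u \<in> dverts n \<Longrightarrow> \<exists>!v. M u v"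
  unfolding gen_links_def by (elim conjE) (erule bspec)

lemma gen_links_link_unique:
  assumes M: "gen_links n M" and "M u v" "M u' v'" "fst u' = fst u" "fst v' = fst v"
  shows "u' = u \<and> v' = v"
proof -
  have "fst u \<le> n" "fst v \<le> n" "fst u \<noteq> fst v"
    using gen_links_in_dverts[OF M \<open>M u v\<close>] unfolding dverts_def by (auto simp: mem_Times_iff)
  then have "\<exists>!e. M (fst e) (snd e) \<and> fst (fst e) = fst u \<and> fst (snd e) = fst v"
    by (rule gen_links_link_between[OF M])
  then have "(u', v') = (u, v)"
    using assms(2-) by (metis fst_conv snd_conv)
  then show ?thesis by simp
qed

definition link_partner :: "(vert \<Rightarrow> vert \<Rightarrow> bool) \<Rightarrow> vert \<Rightarrow> vert" where
  "link_partner M u = (THE v. M u v)"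

lemma gen_links_link_partner:
  "gen_links n M \<Longrightarrow> u \<in> dverts n \<Longrightarrow> M u (link_partner M u)"
  unfolding link_partner_def by (rule theI'[OF gen_links_partner])

lemma link_partner_eq:
  assumes M: "gen_links n M" and "M u v"
  shows "link_partner M u = v"
proof -
  have "u \<in> dverts n" using gen_links_in_dverts[OF M \<open>M u v\<close>] by blast
  then have "\<exists>!v. M u v" by (rule gen_links_partner[OF M])
  then show ?thesis unfolding link_partner_def using \<open>M u v\<close> by (rule the1_equality)
qed

definition link_arc :: "(vert \<Rightarrow> vert \<Rightarrow> bool) \<Rightarrow> vert \<Rightarrow> vert" where
  "link_arc M u = (fst u, fst (link_partner M u))"

lemma bij_betw_link_arc:
  assumes M: "gen_links n M"
  shows "bij_betw (link_arc M) (dverts n) (truncated_complete_verts n)"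
proof (rule bij_betw_imageI)
  show "inj_on (link_arc M) (dverts n)"
  proof (rule inj_onI)
    fix u u' assume "u \<in> dverts n" "u' \<in> dverts n" "link_arc M u = link_arc M u'"
    then show "u = u'"
      using gen_links_link_unique[OF M gen_links_link_partner[OF M] gen_links_link_partner[OF M]]
      unfolding link_arc_def by auto
  qed
  show "link_arc M ` dverts n = truncated_complete_verts n"
  proof
    show "link_arc M ` dverts n \<subseteq> truncated_complete_verts n"
    proof
      fix x assume "x \<in> link_arc M ` dverts n"
      then obtain u where u: "u \<in> dverts n" and x: "x = link_arc M u" by blast
      have "link_partner M u \<in> dverts n" "fst u \<noteq> fst (link_partner M u)"
        using gen_links_in_dverts[OF M gen_links_link_partner[OF M u]] by auto
      with u show "x \<in> truncated_complete_verts n"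
        unfolding x link_arc_def truncated_complete_verts_def dverts_def by (auto simp: mem_Times_iff)
    qed
    show "truncated_complete_verts n \<subseteq> link_arc M ` dverts n"
    proof
      fix x assume "x \<in> truncated_complete_verts n"
      then obtain u v where uv: "M u v" "fst u = fst x" "fst v = snd x"
        using gen_links_link_between[OF M] unfolding truncated_complete_verts_def by fastforce
      then have "x = link_arc M u"
        unfolding link_arc_def link_partner_eq[OF M uv(1)] by simp
      moreover have "u \<in> dverts n" using gen_links_in_dverts[OF M uv(1)] by blast
      ultimately show "x \<in> link_arc M ` dverts n" by blast
    qed
  qed
qed

lemma link_arc_adj_imp_gen_dcell_adj:
  assumes M: "gen_links n M" and u: "u \<in> dverts n" and v: "v \<in> dverts n"
    and adj: "truncated_complete_adj (link_arc M u) (link_arc M v)"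
  shows "GenDCell1 n M u v"
proof -
  have "inner_edge u v \<or> M u v"
  proof (cases "fst u = fst v")
    case True
    then have "u \<noteq> v"
      using adj gen_links_in_dverts[OF M gen_links_link_partner[OF M v]]
      unfolding truncated_complete_adj_def link_arc_def by auto
    with True show ?thesis unfolding inner_edge_def by (auto simp: prod_eq_iff)
  next
    case False
    then have "fst (link_partner M v) = fst u" "fst v = fst (link_partner M u)"
      using adj unfolding truncated_complete_adj_def link_arc_def by auto
    then have "link_partner M v = u \<and> v = link_partner M u"
      using gen_links_link_unique[OF M gen_links_link_partner[OF M u]
          gen_links_sym[OF M gen_links_link_partner[OF M v]]]
      by blast
    then show ?thesis using gen_links_link_partner[OF M u] by simp
  qed
  then show ?thesis using u v unfolding GenDCell1_def dgraph_def by blast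
qed

lemma hamiltonian_connected_gen_dcell:
  assumes M: "gen_links n M"
    and hc: "hamiltonian_connected (truncated_complete_verts n) truncated_complete_adj"
  shows "hamiltonian_connected (dverts n) (GenDCell1 n M)"
proof -
  let ?g = "the_inv_into (dverts n) (link_arc M)"
  have bij: "bij_betw (link_arc M) (dverts n) (truncated_complete_verts n)"
    using M by (rule bij_betw_link_arc)
  have "bij_graph_hom (truncated_complete_verts n) truncated_complete_adj
      (dverts n) (GenDCell1 n M) ?g"
    unfolding bij_graph_hom_def
  proof (intro conjI ballI impI)
    show "bij_betw ?g (truncated_complete_verts n) (dverts n)"
      using bij by (rule bij_betw_the_inv_into)
    fix x y assume "x \<in> truncated_complete_verts n" "y \<in> truncated_complete_verts n"
      and "truncated_complete_adj x y"
    then show "GenDCell1 n M (?g x) (?g y)"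
      using link_arc_adj_imp_gen_dcell_adj[OF M, of "?g x" "?g y"]
        bij_betw_apply[OF bij_betw_the_inv_into[OF bij]] f_the_inv_into_f_bij_betw[OF bij]
      by simp
  qed
  then show ?thesis using hc by (rule hamiltonian_connected_bij_graph_hom)
qed

lemma gen_links_dcell_link: "gen_links n (dcell_link n)"
proof -
  have sym: "dcell_link n v u" if "dcell_link n u v" for u v
    using that unfolding dcell_link_def by auto
  have copies: "u \<in> dverts n \<and> v \<in> dverts n \<and> fst u \<noteq> fst v" if "dcell_link n u v" for u v
    using that unfolding dcell_link_def dverts_def by (auto simp: mem_Times_iff)
  have between: "\<exists>!e. dcell_link n (fst e) (snd e) \<and> fst (fst e) = a \<and> fst (snd e) = b"
    if ab: "a \<le> n" "b \<le> n" "a \<noteq> b" for a b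
  proof -
    let ?e = "if a < b then ((a, b - 1), (b, a)) else ((a, b), (b, a - 1))"
    have "dcell_link n (fst ?e) (snd ?e) \<and> fst (fst ?e) = a \<and> fst (snd ?e) = b"
      using ab unfolding dcell_link_def by auto
    moreover have "e = ?e"
      if "dcell_link n (fst e) (snd e) \<and> fst (fst e) = a \<and> fst (snd e) = b" for e
      using that unfolding dcell_link_def by (auto simp: prod_eq_iff)
    ultimately show ?thesis by (rule ex1I)
  qed
  have partner: "\<exists>!v. dcell_link n u v" if u: "u \<in> dverts n" for u
  proof -
    let ?v = "if snd u < fst u then (snd u, fst u - 1) else (Suc (snd u), fst u)"
    have "dcell_link n u ?v"
      using u unfolding dcell_link_def dverts_def by (auto simp: mem_Times_iff)
    moreover have "v = ?v" if "dcell_link n u v" for v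
      using that unfolding dcell_link_def by (auto simp: prod_eq_iff)
    ultimately show ?thesis by (rule ex1I)
  qed
  show ?thesis unfolding gen_links_def
    using sym copies between partner by blast
qed

lemma truncated_complete_verts_3:
  "truncated_complete_verts 3 =
     {(0,1), (0,2), (0,3), (1,0), (1,2), (1,3), (2,0), (2,1), (2,3), (3,0), (3,1), (3,2)}"
proof -
  have "a \<le> 3 \<longleftrightarrow> a = 0 \<or> a = 1 \<or> a = 2 \<or> a = 3" for a :: nat by auto
  then show ?thesis unfolding truncated_complete_verts_def by auto
qed

lemma truncated_tetrahedron_base_paths:
  assumes "y \<in> {(1,0), (0,2), (1,2), (2,0), (2,1), (2,3)}"
  shows "\<exists>p. ham_path (truncated_complete_verts 3) truncated_complete_adj (0,1) y p"
proof -
  have "list_all (\<lambda>p. ham_path (truncated_complete_verts 3) truncated_complete_adj (0,1) (last p) p)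
    [[(0,1), (0,2), (0,3), (3,0), (3,1), (3,2), (2,3), (2,0), (2,1), (1,2), (1,3), (1,0)],
     [(0,1), (0,3), (3,0), (3,2), (3,1), (1,3), (1,0), (1,2), (2,1), (2,3), (2,0), (0,2)],
     [(0,1), (0,3), (0,2), (2,0), (2,1), (2,3), (3,2), (3,0), (3,1), (1,3), (1,0), (1,2)],
     [(0,1), (0,2), (0,3), (3,0), (3,2), (3,1), (1,3), (1,0), (1,2), (2,1), (2,3), (2,0)],
     [(0,1), (0,3), (0,2), (2,0), (2,3), (3,2), (3,0), (3,1), (1,3), (1,0), (1,2), (2,1)],
     [(0,1), (0,2), (0,3), (3,0), (3,2), (3,1), (1,3), (1,0), (1,2), (2,1), (2,0), (2,3)]]"
    unfolding ham_path_iff_successively truncated_complete_verts_3 truncated_complete_adj_def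
    by auto
  then show ?thesis using assms by auto
qed

lemma truncated_tetrahedron_base_targets:
  assumes "y \<in> truncated_complete_verts 3" "y \<noteq> (0,1)"
  obtains "y \<in> {(1,0), (0,2), (1,2), (2,0), (2,1), (2,3)}"
    | "map_prod (transpose 2 3) (transpose 2 3) y \<in> {(1,0), (0,2), (1,2), (2,0), (2,1), (2,3)}"
  using assms unfolding truncated_complete_verts_3 by (auto simp: transpose_def)

lemma hamiltonian_connected_truncated_tetrahedron:
  "hamiltonian_connected (truncated_complete_verts 3) truncated_complete_adj"
proof (rule hamiltonian_connected_by_symmetry[OF _ truncated_tetrahedron_base_paths])
  fix x y assume x: "x \<in> truncated_complete_verts 3" and y: "y \<in> truncated_complete_verts 3"
    and "x \<noteq> y"
  obtain \<sigma> where \<sigma>: "\<sigma> permutes {0..3}" "map_prod \<sigma> \<sigma> (0, 1) = x"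
    using x by (rule truncated_complete_verts_transitive)
  define z where "z = map_prod (inv \<sigma>) (inv \<sigma>) y"
  have y_z: "y = map_prod \<sigma> \<sigma> z"
    unfolding z_def by (simp add: permutes_inverses[OF \<sigma>(1)] map_prod_def split: prod.split)
  have "z \<in> truncated_complete_verts 3"
    using bij_graph_hom_truncated_complete_permutes[OF permutes_inv[OF \<sigma>(1)]] y
    unfolding z_def bij_graph_hom_def bij_betw_def by blast
  moreover have "z \<noteq> (0, 1)" using \<open>x \<noteq> y\<close> \<sigma>(2) y_z by blast
  ultimately show "\<exists>g y'. bij_graph_hom (truncated_complete_verts 3) truncated_complete_adj
      (truncated_complete_verts 3) truncated_complete_adj g \<and> g (0, 1) = x \<and> g y' = y \<and>
      y' \<in> {(1,0), (0,2), (1,2), (2,0), (2,1), (2,3)}"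
  proof (cases rule: truncated_tetrahedron_base_targets)
    case 1
    then show ?thesis using bij_graph_hom_truncated_complete_permutes[OF \<sigma>(1)] \<sigma>(2) y_z by blast
  next
    case 2
    define \<tau> :: "nat \<Rightarrow> nat" where "\<tau> = transpose 2 3"
    have "\<sigma> \<circ> \<tau> permutes {0..3}"
      unfolding \<tau>_def by (intro permutes_compose[OF _ \<sigma>(1)] permutes_swap_id) auto
    moreover have "map_prod (\<sigma> \<circ> \<tau>) (\<sigma> \<circ> \<tau>) (0, 1) = x" using \<sigma>(2) by (simp add: \<tau>_def)
    moreover have "map_prod (\<sigma> \<circ> \<tau>) (\<sigma> \<circ> \<tau>) (map_prod \<tau> \<tau> z) = y"
      using y_z by (simp add: \<tau>_def map_prod_def split: prod.split)
    ultimately show ?thesis using 2 bij_graph_hom_truncated_complete_permutes unfolding \<tau>_def by blast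
  qed
qed

theorem lemma4:
  shows "hamiltonian_connected (dverts 3) (DCell1 3) \<and>
         (\<forall>M. gen_links 3 M \<longrightarrow> hamiltonian_connected (dverts 3) (GenDCell1 3 M))"
proof -
  have "hamiltonian_connected (dverts 3) (GenDCell1 3 M)" if "gen_links 3 M" for M
    using that hamiltonian_connected_truncated_tetrahedron by (rule hamiltonian_connected_gen_dcell)
  moreover have "DCell1 3 = GenDCell1 3 (dcell_link 3)"
    unfolding DCell1_def GenDCell1_def ..
  ultimately show ?thesis using gen_links_dcell_link by simp
qed

end
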